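(* Let $k\ge1$ be an integer and write $[k+]=\{1,2,\ldots,k\}$. Then $d(A)\le d([k+])$ for every nonempty set $A\subseteq\{0,1,\ldots,k\}$, and if $k\notin\{1,3\}$ then equality holds only for $A=[k+]$. Equivalently, in base $2$ lunar arithmetic, among all $k$-digit numbers $n$ (i.e. $2^{k-1}\le n<2^k$), the maximal value of $d_2(n)$ occurs at $n=2^k-2$ (binary $11\ldots10$), and this is the unique maximum when $k\notin\{2,4\}$.
   Context: $\mathbb{N}=\{0,1,2,\ldots\}$. For $A,B\subseteq\mathbb{N}$, $A+B=\{a+b:a\in A,b\in B\}$. For a nonempty finite $C\subseteq\mathbb{N}$, $B\subseteq\mathbb{N}$ is a divisor of $C$ if $B+D=C$ for some $D\subseteq\mathbb{N}$, and $d(C)$ is the number of divisors of $C$. Base-$b$ lunar arithmetic ($b\ge2$): for numbers with base-$b$ digits $x=\sum_i x_ib^i$, $y=\sum_j y_jb^j$ ($0\le x_i,y_j\le b-1$), the lunar product is $x\otimes y=\sum_n\big(\max_{i+j=n}\min(x_i,y_j)\big)b^n$. For a positive integer $n$, $d_b(n)$ is the number of positive integers $m$ such that $m\otimes q=n$ for some integer $q$ (the lunar divisors of $n$). *)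

theory Defs
  imports Main
begin

definition sumset :: "nat set \<Rightarrow> nat set \<Rightarrow> nat set" where
  "sumset A B = {a + b | a b. a \<in> A \<and> b \<in> B}"

definition is_divisor :: "nat set \<Rightarrow> nat set \<Rightarrow> bool" where
  "is_divisor B C \<longleftrightarrow> (\<exists>D. sumset B D = C)"

definition num_divisors :: "nat set \<Rightarrow> nat" where
  "num_divisors C = card {B. is_divisor B C}"

end

theory Submission
  imports Defs
begin

(* Write N(m) for the number of divisors of {0..m} that contain 0.  If B is a divisor of a finite
   set A with a = Min A, then Min B <= a, and B is determined by Min B together with the set
   obtained by translating B to start at 0 and filling in those gaps of B that are also gaps of
   the translate of A; this set is a divisor of {0..Max A - a} containing 0.  Hence
   d(A) <= (a + 1) N(Max A - a), strictly unless A is an interval, while translating divisors of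
   {0..k-1} by 0 or 1 shows d({1..k}) >= 2 N(k - 1).  It remains to compare (a + 1) N(k - a) with
   2 N(k - 1): the case a = 0 is N(m + 1) <= 2 N(m), and a >= 2 follows from
   3 N(m) <= 2 N(m + 1) because (a + 2)/(a + 1) <= 3/2.  Both inequalities are strict except for
   m = 0 and m = 1 respectively, which produce the exceptions k = 1 and k = 3. *)

lemma card_less_if_inj_on_psubset:
  assumes "inj_on f A" "f ` A \<subset> B" "finite B"
  shows "card A < card B"
  using psubset_card_mono[OF assms(3,2)] card_image[OF assms(1)] by simp

lemma sumset_iff: "z \<in> sumset B D \<longleftrightarrow> (\<exists>x\<in>B. \<exists>y\<in>D. z = x + y)"
  unfolding sumset_def by blast

lemma sumset_eq_image: "sumset B D = (\<lambda>(x, y). x + y) ` (B \<times> D)"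
  unfolding sumset_def by auto

lemma sumset_commute: "sumset B D = sumset D B"
  unfolding sumset_def by (metis add.commute)

lemma sumset_empty_iff: "sumset B D = {} \<longleftrightarrow> B = {} \<or> D = {}"
  unfolding sumset_def by auto

lemma sumset_translate:
  "sumset ((\<lambda>x. x + i) ` B) ((\<lambda>y. y + j) ` D) = (\<lambda>z. z + (i + j)) ` sumset B D"
  unfolding sumset_eq_image by (force simp: image_iff)

lemma finite_sumset_factor:
  assumes "finite (sumset B D)" and "y \<in> D"
  shows "finite B"
proof (rule finite_subset)
  show "B \<subseteq> (\<lambda>z. z - y) ` sumset B D"
    using assms(2) by (force simp: sumset_iff image_iff)
qed (use assms(1) in simp)

lemma Min_sumset:
  assumes "finite B" "B \<noteq> {}" "finite D" "D \<noteq> {}"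
  shows "Min (sumset B D) = Min B + Min D"
proof (rule Min_eqI)
  show "Min B + Min D \<in> sumset B D"
    using Min_in[OF assms(1,2)] Min_in[OF assms(3,4)] unfolding sumset_iff by blast
qed (use assms in \<open>auto simp: sumset_eq_image add_mono\<close>)

lemma Max_sumset:
  assumes "finite B" "B \<noteq> {}" "finite D" "D \<noteq> {}"
  shows "Max (sumset B D) = Max B + Max D"
proof (rule Max_eqI)
  show "Max B + Max D \<in> sumset B D"
    using Max_in[OF assms(1,2)] Max_in[OF assms(3,4)] unfolding sumset_iff by blast
qed (use assms in \<open>auto simp: sumset_eq_image add_mono\<close>)

lemma is_divisorE:
  assumes "is_divisor B A" "finite A" "A \<noteq> {}"
  obtains D where "sumset B D = A" "finite B" "B \<noteq> {}" "finite D" "D \<noteq> {}"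
proof -
  obtain D where BD: "sumset B D = A" using assms(1) unfolding is_divisor_def by blast
  then have "B \<noteq> {}" "D \<noteq> {}" using assms(3) sumset_empty_iff by auto
  moreover have "finite B" "finite D"
    using BD assms(2) \<open>B \<noteq> {}\<close> \<open>D \<noteq> {}\<close> finite_sumset_factor[of B D] finite_sumset_factor[of D B]
    by (auto simp: sumset_commute)
  ultimately show thesis using that BD by blast
qed

lemma finite_divisors:
  assumes "finite A" "A \<noteq> {}"
  shows "finite {B. is_divisor B A}"
proof (rule finite_subset)
  show "{B. is_divisor B A} \<subseteq> Pow {0..Max A}"
  proof
    fix B assume "B \<in> {B. is_divisor B A}"
    then obtain D where "sumset B D = A" "finite B" "B \<noteq> {}" "finite D" "D \<noteq> {}"
      using is_divisorE assms by blast
    then have "Max B \<le> Max A" using Max_sumset by fastforce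
    then show "B \<in> Pow {0..Max A}" using \<open>finite B\<close> by (auto intro: order_trans[OF Max_ge])
  qed
qed simp

section \<open>Divisors of an interval\<close>

text \<open>\<open>interval_divisor B b m\<close> says \<open>Min B = 0\<close>, \<open>Max B = b \<le> m\<close> and
  \<open>sumset B {0..m - b} = {0..m}\<close>; these are exactly the divisors of \<open>{0..m}\<close> containing 0.\<close>

definition interval_divisor :: "nat set \<Rightarrow> nat \<Rightarrow> nat \<Rightarrow> bool" where
  "interval_divisor B b m \<longleftrightarrow> 0 \<in> B \<and> b \<in> B \<and> b \<le> m \<and> (\<forall>x\<in>B. x \<le> b) \<and>
    (\<forall>x\<le>b. \<exists>y\<in>B. y \<le> x \<and> x \<le> y + (m - b))"

definition interval_divisors :: "nat \<Rightarrow> nat set set" where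
  "interval_divisors m = {B. \<exists>b. interval_divisor B b m}"

lemma interval_divisorI:
  assumes "0 \<in> B" "b \<in> B" "b \<le> m" "\<And>x. x \<in> B \<Longrightarrow> x \<le> b"
    "\<And>x. x \<le> b \<Longrightarrow> \<exists>y\<in>B. y \<le> x \<and> x \<le> y + (m - b)"
  shows "interval_divisor B b m"
  using assms unfolding interval_divisor_def by blast

lemma interval_divisorD:
  assumes "interval_divisor B b m"
  shows "0 \<in> B" "b \<in> B" "b \<le> m" "\<And>x. x \<in> B \<Longrightarrow> x \<le> b"
    "\<And>x. x \<le> b \<Longrightarrow> \<exists>y\<in>B. y \<le> x \<and> x \<le> y + (m - b)"
  using assms unfolding interval_divisor_def by blast+

lemma zero_mem_interval_divisors: "B \<in> interval_divisors m \<Longrightarrow> 0 \<in> B"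
  unfolding interval_divisors_def using interval_divisorD(1) by blast

lemma sumset_interval_divisor:
  assumes "interval_divisor B b m"
  shows "sumset B {0..m - b} = {0..m}"
proof (intro set_eqI iffI)
  fix z assume "z \<in> sumset B {0..m - b}"
  then show "z \<in> {0..m}" using interval_divisorD(3,4)[OF assms] by (fastforce simp: sumset_iff)
next
  fix z assume z: "z \<in> {0..m}"
  show "z \<in> sumset B {0..m - b}"
  proof (cases "z \<le> b")
    case True
    then obtain y where "y \<in> B" "y \<le> z" "z \<le> y + (m - b)"
      using interval_divisorD(5)[OF assms] by blast
    then show ?thesis unfolding sumset_iff by (intro bexI[of _ y] bexI[of _ "z - y"]) auto
  next
    case False
    then show ?thesis using z interval_divisorD(2)[OF assms] unfolding sumset_iff
      by (intro bexI[of _ b] bexI[of _ "z - b"]) auto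
  qed
qed

lemma interval_divisor_full: "interval_divisor B m m \<Longrightarrow> B = {0..m}"
  using sumset_interval_divisor[of B m m] by (simp add: sumset_def)

lemma interval_divisor_imp_le: "interval_divisor B b m \<Longrightarrow> x \<in> B \<Longrightarrow> x \<le> m"
  using interval_divisorD(3,4) le_trans by blast

lemma finite_interval_divisors: "finite (interval_divisors m)"
proof (rule finite_subset)
  show "interval_divisors m \<subseteq> Pow {0..m}"
    unfolding interval_divisors_def using interval_divisor_imp_le by fastforce
qed simp

lemma interval_mem_interval_divisors: "{0..m} \<in> interval_divisors m"
  unfolding interval_divisors_def interval_divisor_def by (rule CollectI, rule exI[of _ m]) auto

lemma interval_divisor_mono:
  assumes "interval_divisor B b m" "m \<le> m'"
  shows "interval_divisor B b m'"
proof (rule interval_divisorI)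
  show "\<exists>y\<in>B. y \<le> x \<and> x \<le> y + (m' - b)" if "x \<le> b" for x
    using interval_divisorD(5)[OF assms(1) that] assms(2)
    by (meson add_le_mono diff_le_mono le_refl le_trans)
qed (use interval_divisorD[OF assms(1)] assms(2) in auto)

lemma interval_divisors_mono: "m \<le> m' \<Longrightarrow> interval_divisors m \<subseteq> interval_divisors m'"
  unfolding interval_divisors_def using interval_divisor_mono by blast

lemma strict_mono_card_interval_divisors: "strict_mono (\<lambda>m. card (interval_divisors m))"
proof (rule strict_monoI)
  fix m m' :: nat assume "m < m'"
  have "{0..m'} \<notin> interval_divisors m"
    using \<open>m < m'\<close> interval_divisor_imp_le[of "{0..m'}" _ m]
    unfolding interval_divisors_def by fastforce
  then have "interval_divisors m \<subset> interval_divisors m'"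
    using interval_divisors_mono[of m m'] interval_mem_interval_divisors[of m'] \<open>m < m'\<close> by auto
  then show "card (interval_divisors m) < card (interval_divisors m')"
    by (rule psubset_card_mono[OF finite_interval_divisors])
qed

lemma card_interval_divisors_pos: "card (interval_divisors m) > 0"
  using finite_interval_divisors interval_mem_interval_divisors card_gt_0_iff by blast

section \<open>Comparing \<open>num_divisors A\<close> with interval divisors\<close>

definition fill_gaps :: "nat set \<Rightarrow> nat set \<Rightarrow> nat set" where
  "fill_gaps A B = {x. x + Min B \<in> B} \<union> ({0..Max B - Min B} - {x. x + Min A \<in> A})"

lemma interval_divisor_fill_gaps:
  assumes B: "finite B" "B \<noteq> {}" and D: "finite D" "D \<noteq> {}"
  defines "A \<equiv> sumset B D"
  shows "interval_divisor (fill_gaps A B) (Max B - Min B) (Max A - Min A)"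
proof -
  have A: "Min A = Min B + Min D" "Max A = Max B + Max D"
    unfolding A_def using Min_sumset[OF B D] Max_sumset[OF B D] by simp_all
  have B_bounds: "Min B \<le> x" "x \<le> Max B" if "x \<in> B" for x using B that by simp_all
  have D_bounds: "Min D \<le> y" "y \<le> Max D" if "y \<in> D" for y using D that by simp_all
  have "Min B \<in> B" "Max B \<in> B" "Min D \<le> Max D" using B D by simp_all
  show ?thesis unfolding fill_gaps_def
  proof (rule interval_divisorI)
    show "x \<le> Max B - Min B"
      if "x \<in> {x. x + Min B \<in> B} \<union> ({0..Max B - Min B} - {x. x + Min A \<in> A})" for x
      using that B_bounds(2)[of "x + Min B"] by auto
  next
    fix x assume x: "x \<le> Max B - Min B"
    show "\<exists>y\<in>{x. x + Min B \<in> B} \<union> ({0..Max B - Min B} - {x. x + Min A \<in> A}).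
        y \<le> x \<and> x \<le> y + (Max A - Min A - (Max B - Min B))"
    proof (cases "x + Min A \<in> A")
      case True
      then obtain u v where "u \<in> B" "v \<in> D" "x + Min A = u + v"
        unfolding A_def sumset_iff by blast
      then show ?thesis
        using A B_bounds[of u] D_bounds[of v] by (intro bexI[of _ "u - Min B"]) auto
    qed (use x in auto)
  qed (use A B_bounds \<open>Min B \<in> B\<close> \<open>Max B \<in> B\<close> \<open>Min D \<le> Max D\<close> in auto)
qed

lemma fill_gaps_Int:
  assumes B: "finite B" "B \<noteq> {}" and D: "finite D" "D \<noteq> {}"
  defines "A \<equiv> sumset B D"
  shows "fill_gaps A B \<inter> {x. x + Min A \<in> A} = {x. x + Min B \<in> B}"
proof -
  have "x + Min A \<in> A" if "x + Min B \<in> B" for x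
    using that Min_in[OF D] unfolding A_def Min_sumset[OF B D] sumset_iff
    by (metis add.assoc)
  then show ?thesis unfolding fill_gaps_def by blast
qed

lemma translate_Min_eq:
  assumes "finite (B :: nat set)"
  shows "(\<lambda>x. x + Min B) ` {x. x + Min B \<in> B} = B"
proof (intro set_eqI iffI)
  fix z assume "z \<in> B"
  then have "Min B \<le> z" using assms by simp
  then show "z \<in> (\<lambda>x. x + Min B) ` {x. x + Min B \<in> B}"
    using \<open>z \<in> B\<close> by (intro image_eqI[of _ _ "z - Min B"]) auto
qed auto

lemma divisor_fill_gaps:
  assumes "is_divisor B A" "finite A" "A \<noteq> {}"
  shows "finite B" "Min B \<le> Min A"
    "interval_divisor (fill_gaps A B) (Max B - Min B) (Max A - Min A)"
    "fill_gaps A B \<inter> {x. x + Min A \<in> A} = {x. x + Min B \<in> B}"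
proof -
  obtain D where "sumset B D = A" "finite B" "B \<noteq> {}" "finite D" "D \<noteq> {}"
    using is_divisorE[OF assms] .
  then show "finite B" "Min B \<le> Min A"
    "interval_divisor (fill_gaps A B) (Max B - Min B) (Max A - Min A)"
    "fill_gaps A B \<inter> {x. x + Min A \<in> A} = {x. x + Min B \<in> B}"
    using Min_sumset[of B D] interval_divisor_fill_gaps[of B D] fill_gaps_Int[of B D] by auto
qed

lemma inj_on_Min_fill_gaps:
  assumes "finite A" "A \<noteq> {}"
  shows "inj_on (\<lambda>B. (Min B, fill_gaps A B)) {B. is_divisor B A}"
proof (rule inj_onI)
  fix B1 B2 assume "B1 \<in> {B. is_divisor B A}" "B2 \<in> {B. is_divisor B A}"
    and eq: "(Min B1, fill_gaps A B1) = (Min B2, fill_gaps A B2)"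
  then have B: "is_divisor B1 A" "is_divisor B2 A" by simp_all
  then have "{x. x + Min B1 \<in> B1} = {x. x + Min B2 \<in> B2}"
    using divisor_fill_gaps(4)[OF _ assms] eq by (metis prod.inject)
  then show "B1 = B2"
    using translate_Min_eq divisor_fill_gaps(1)[OF _ assms] B eq by (metis prod.inject)
qed

lemma interval_divisor_Max:
  assumes "interval_divisor B b m"
  shows "Max B = b"
proof (rule Max_eqI)
  show "finite B"
    by (rule finite_subset[of B "{0..b}"]) (use interval_divisorD(4)[OF assms] in auto)
qed (use interval_divisorD(2,4)[OF assms] in auto)

lemma fill_gaps_ne_interval:
  assumes "is_divisor B A" "finite A" "A \<noteq> {}" "z \<notin> A" "Min A \<le> z"
  shows "fill_gaps A B \<noteq> {0..z - Min A}"
proof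
  assume gaps: "fill_gaps A B = {0..z - Min A}"
  have "Max {0..z - Min A} = z - Min A" by (rule Max_eqI) auto
  then have "Max B - Min B = z - Min A"
    using interval_divisor_Max[OF divisor_fill_gaps(3)[OF assms(1-3)]] gaps by simp
  moreover have "Max B \<in> B" "Min B \<le> Max B"
    using assms(1-3) by (metis is_divisorE Max_in Min_le)+
  ultimately have "z - Min A \<in> {x. x + Min B \<in> B}"
    by (metis le_add_diff_inverse2 mem_Collect_eq)
  then have "z - Min A \<in> {x. x + Min A \<in> A}" using divisor_fill_gaps(4)[OF assms(1-3)] by blast
  then show False using assms(4,5) by simp
qed

lemma num_divisors_le:
  assumes "finite A" "A \<noteq> {}"
  shows "num_divisors A \<le> (Min A + 1) * card (interval_divisors (Max A - Min A))"
    and "A \<noteq> {Min A..Max A} \<Longrightarrow>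
      num_divisors A < (Min A + 1) * card (interval_divisors (Max A - Min A))"
proof -
  let ?code = "\<lambda>B. (Min B, fill_gaps A B)" and ?Div = "{B. is_divisor B A}"
  let ?T = "{0..Min A} \<times> interval_divisors (Max A - Min A)"
  have inj: "inj_on ?code ?Div" using inj_on_Min_fill_gaps[OF assms] .
  have image: "?code ` ?Div \<subseteq> ?T"
    using divisor_fill_gaps(2,3)[OF _ assms] unfolding interval_divisors_def by auto
  have finite_T: "finite ?T" using finite_interval_divisors by simp
  have card_T: "card ?T = (Min A + 1) * card (interval_divisors (Max A - Min A))"
    by (simp add: card_cartesian_product)
  show "num_divisors A \<le> (Min A + 1) * card (interval_divisors (Max A - Min A))"
    using card_inj_on_le[OF inj image finite_T] card_T unfolding num_divisors_def by simp
  assume "A \<noteq> {Min A..Max A}"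
  moreover have "A \<subseteq> {Min A..Max A}" using assms(1) by (simp add: subset_eq)
  ultimately obtain z where z: "z \<in> {Min A..Max A}" "z \<notin> A" by blast
  then have "(0, {0..z - Min A}) \<in> ?T"
    using interval_mem_interval_divisors[of "z - Min A"]
      interval_divisors_mono[of "z - Min A" "Max A - Min A"] by (auto simp: diff_le_mono)
  moreover have "(0, {0..z - Min A}) \<notin> ?code ` ?Div"
    using fill_gaps_ne_interval[OF _ assms z(2)] z(1) by auto
  ultimately have "?code ` ?Div \<subset> ?T" using image by blast
  then show "num_divisors A < (Min A + 1) * card (interval_divisors (Max A - Min A))"
    using card_less_if_inj_on_psubset[OF inj _ finite_T] card_T unfolding num_divisors_def by simp
qed

lemma num_divisors_le_bound:
  assumes "A \<noteq> {}" "A \<subseteq> {0..k}"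
  shows "num_divisors A \<le> (Min A + 1) * card (interval_divisors (k - Min A))"
    and "num_divisors A = (Min A + 1) * card (interval_divisors (k - Min A)) \<Longrightarrow> A = {Min A..k}"
proof -
  have A: "finite A" "A \<noteq> {}" using assms finite_subset by auto
  then have "Min A \<le> Max A" "Max A \<le> k" using assms(2) Max_in by fastforce+
  then have le: "card (interval_divisors (Max A - Min A)) \<le> card (interval_divisors (k - Min A))"
    using strict_mono_less_eq[OF strict_mono_card_interval_divisors] by (simp add: diff_le_mono)
  have less: "card (interval_divisors (Max A - Min A)) < card (interval_divisors (k - Min A))"
    if "Max A \<noteq> k"
  proof -
    have "Max A - Min A < k - Min A" using that \<open>Min A \<le> Max A\<close> \<open>Max A \<le> k\<close> by linarith
    then show ?thesis using strict_mono_less[OF strict_mono_card_interval_divisors] by simp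
  qed
  show "num_divisors A \<le> (Min A + 1) * card (interval_divisors (k - Min A))"
    using num_divisors_le(1)[OF A] mult_le_mono2[OF le] by (rule le_trans)
  assume eq: "num_divisors A = (Min A + 1) * card (interval_divisors (k - Min A))"
  have "Max A = k"
    using eq num_divisors_le(1)[OF A] less mult_less_mono2[of _ _ "Min A + 1"]
    by (metis leD zero_less_Suc add.commute plus_1_eq_Suc)
  moreover have "A = {Min A..Max A}"
    using eq num_divisors_le(2)[OF A] mult_le_mono2[OF le] by (metis leD)
  ultimately show "A = {Min A..k}" by simp
qed

lemma num_divisors_interval_ge: "(a + 1) * card (interval_divisors m) \<le> num_divisors {a..a + m}"
proof -
  let ?shift = "\<lambda>(i, B). (\<lambda>x. x + i) ` B"
  let ?S = "{0..a} \<times> interval_divisors m"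
  have "inj_on ?shift ?S"
  proof (rule inj_onI, clarify)
    fix i j B C assume "B \<in> interval_divisors m" "C \<in> interval_divisors m"
      and eq: "(\<lambda>x. x + i) ` B = (\<lambda>x. x + j) ` C"
    then have "i \<in> (\<lambda>x. x + j) ` C" "j \<in> (\<lambda>x. x + i) ` B"
      using zero_mem_interval_divisors by (metis add_0 image_eqI)+
    then have "i = j" by auto
    then show "i = j \<and> B = C" using eq by (simp add: inj_image_eq_iff)
  qed
  moreover have "?shift ` ?S \<subseteq> {B. is_divisor B {a..a + m}}"
  proof clarify
    fix i B assume "i \<in> {0..a}" "B \<in> interval_divisors m"
    then obtain b where "interval_divisor B b m" unfolding interval_divisors_def by blast
    then have "sumset ((\<lambda>x. x + i) ` B) ((\<lambda>y. y + (a - i)) ` {0..m - b})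
        = (\<lambda>z. z + a) ` {0..m}"
      using \<open>i \<in> {0..a}\<close> by (simp only: sumset_translate sumset_interval_divisor) simp
    also have "\<dots> = {a..a + m}" by (simp add: add.commute)
    finally have "sumset ((\<lambda>x. x + i) ` B) ((\<lambda>y. y + (a - i)) ` {0..m - b}) = {a..a + m}" .
    then show "is_divisor ((\<lambda>x. x + i) ` B) {a..a + m}" unfolding is_divisor_def by blast
  qed
  moreover have "finite {B. is_divisor B {a..a + m}}" by (rule finite_divisors) auto
  ultimately show ?thesis
    unfolding num_divisors_def using card_inj_on_le by (fastforce simp: card_cartesian_product)
qed

section \<open>Growth of the number of interval divisors\<close>

lemma interval_divisor_pull:
  assumes B: "interval_divisor B b (Suc m)"
  shows "interval_divisor (insert 0 {y. Suc y \<in> B}) (b - 1) m"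
proof (rule interval_divisorI)
  show "b - 1 \<in> insert 0 {y. Suc y \<in> B}" using interval_divisorD(2)[OF B] by (cases b) auto
  show "x \<le> b - 1" if "x \<in> insert 0 {y. Suc y \<in> B}" for x
    using interval_divisorD(4)[OF B, of "Suc x"] that by auto
  show "\<exists>y\<in>insert 0 {y. Suc y \<in> B}. y \<le> x \<and> x \<le> y + (m - (b - 1))" if x: "x \<le> b - 1" for x
  proof (cases x)
    case (Suc x')
    then have "Suc x \<le> b" using x by linarith
    then obtain y where y: "y \<in> B" "y \<le> Suc x" "Suc x \<le> y + (Suc m - b)"
      using interval_divisorD(5)[OF B] by blast
    then show ?thesis
      using x Suc by (cases y) (auto intro: bexI[of _ 0] bexI[of _ "y - 1"])
  qed simp
qed (use interval_divisorD(3)[OF B] in auto)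

lemma card_interval_divisors_Suc_le:
  shows "card (interval_divisors (Suc m)) \<le> 2 * card (interval_divisors m)"
    and "1 \<le> m \<Longrightarrow> card (interval_divisors (Suc m)) < 2 * card (interval_divisors m)"
proof -
  let ?code = "\<lambda>B. (insert 0 {y. Suc y \<in> B}, 1 \<in> B)"
  let ?T = "interval_divisors m \<times> (UNIV :: bool set)"
  have inj: "inj_on ?code (interval_divisors (Suc m))"
  proof (rule inj_onI)
    fix B C assume "B \<in> interval_divisors (Suc m)" "C \<in> interval_divisors (Suc m)"
      and eq: "?code B = ?code C"
    then have "0 \<in> B" "0 \<in> C" using zero_mem_interval_divisors by blast+
    moreover have "Suc n \<in> B \<longleftrightarrow> Suc n \<in> C" for n
    proof (cases n)
      case (Suc n')
      have "Suc n' \<in> insert 0 {y. Suc y \<in> B} \<longleftrightarrow> Suc n' \<in> insert 0 {y. Suc y \<in> C}"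
        using eq by simp
      then show ?thesis using Suc by simp
    qed (use eq in simp)
    ultimately show "B = C" by (metis not0_implies_Suc set_eqI)
  qed
  have image: "?code ` interval_divisors (Suc m) \<subseteq> ?T"
    using interval_divisor_pull unfolding interval_divisors_def by blast
  have finite_T: "finite ?T" using finite_interval_divisors by simp
  have card_T: "card ?T = 2 * card (interval_divisors m)"
    by (simp add: card_cartesian_product)
  show "card (interval_divisors (Suc m)) \<le> 2 * card (interval_divisors m)"
    using card_inj_on_le[OF inj image finite_T] card_T by simp
  assume "1 \<le> m"
  have "({0..m}, False) \<notin> ?code ` interval_divisors (Suc m)"
  proof
    assume "({0..m}, False) \<in> ?code ` interval_divisors (Suc m)"
    then obtain B b where B: "interval_divisor B b (Suc m)" "1 \<notin> B"
      and pull: "insert 0 {y. Suc y \<in> B} = {0..m}"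
      unfolding interval_divisors_def by auto
    have "m \<in> insert 0 {y. Suc y \<in> B}" using pull by simp
    then have "Suc m \<in> B" using \<open>1 \<le> m\<close> by simp
    then have "b = Suc m" using interval_divisorD(3,4)[OF B(1)] by fastforce
    then have "interval_divisor B (Suc m) (Suc m)" using B(1) by simp
    then have "B = {0..Suc m}" by (rule interval_divisor_full)
    then show False using B(2) by simp
  qed
  moreover have "({0..m}, False) \<in> ?T" using interval_mem_interval_divisors by simp
  ultimately have "?code ` interval_divisors (Suc m) \<subset> ?T" using image by blast
  then show "card (interval_divisors (Suc m)) < 2 * card (interval_divisors m)"
    using card_less_if_inj_on_psubset[OF inj _ finite_T] card_T by simp
qed

lemma interval_divisor_push:
  assumes B: "interval_divisor B b m"
  shows "interval_divisor (insert 0 (Suc ` B)) (Suc b) (Suc m)"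
proof (rule interval_divisorI)
  show "\<exists>y\<in>insert 0 (Suc ` B). y \<le> x \<and> x \<le> y + (Suc m - Suc b)" if x: "x \<le> Suc b" for x
  proof (cases x)
    case (Suc x')
    then obtain y where "y \<in> B" "y \<le> x'" "x' \<le> y + (m - b)"
      using x interval_divisorD(5)[OF B, of x'] by auto
    then show ?thesis using Suc by (intro bexI[of _ "Suc y"]) auto
  qed simp
qed (use interval_divisorD[OF B] in auto)

lemma interval_divisor_stretch:
  assumes B: "interval_divisor B b m" and "1 \<in> B" "b < m"
  shows "interval_divisor (insert 0 (Suc ` (B - {0}))) (Suc b) (Suc m)"
proof (rule interval_divisorI)
  have "1 \<le> b" using interval_divisorD(4)[OF B \<open>1 \<in> B\<close>] .
  then show "Suc b \<in> insert 0 (Suc ` (B - {0}))" using interval_divisorD(2)[OF B] by simp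
  show "\<exists>y\<in>insert 0 (Suc ` (B - {0})). y \<le> x \<and> x \<le> y + (Suc m - Suc b)"
    if x: "x \<le> Suc b" for x
  proof (cases "x \<le> 1")
    case False
    then obtain x' where x': "x = Suc x'" "1 \<le> x'" by (cases x) auto
    then obtain y where y: "y \<in> B" "y \<le> x'" "x' \<le> y + (m - b)"
      using x interval_divisorD(5)[OF B, of x'] by auto
    have "2 \<in> insert 0 (Suc ` (B - {0}))" using \<open>1 \<in> B\<close> by (simp add: image_iff)
    then show ?thesis
      using x' y by (cases "y = 0") (auto intro: bexI[of _ 2] bexI[of _ "Suc y"])
  qed (use \<open>b < m\<close> in auto)
qed (use interval_divisorD[OF B] in auto)

definition stretchable_divisors :: "nat \<Rightarrow> nat set set" where
  "stretchable_divisors m =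
    {B \<in> interval_divisors m. insert 0 (Suc ` (B - {0})) \<in> interval_divisors (Suc m)}"

lemma finite_stretchable_divisors: "finite (stretchable_divisors m)"
  using finite_interval_divisors unfolding stretchable_divisors_def by simp

lemma singleton_zero_stretchable: "{0} \<in> stretchable_divisors m"
proof -
  have "{0} \<in> interval_divisors n" for n
    unfolding interval_divisors_def interval_divisor_def by (rule CollectI, rule exI[of _ 0]) auto
  then show ?thesis unfolding stretchable_divisors_def by simp
qed

lemma insert_zero_Suc_image_eq_iff: "insert 0 (Suc ` B) = insert 0 (Suc ` C) \<longleftrightarrow> B = C"
  by (auto simp: insert_ident inj_image_eq_iff)

lemma card_add_stretchable_le:
  "card (interval_divisors m) + card (stretchable_divisors m) \<le> card (interval_divisors (Suc m))"
proof -
  let ?push = "\<lambda>B. insert 0 (Suc ` B)" and ?stretch = "\<lambda>B. insert 0 (Suc ` (B - {0}))"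
  let ?P = "?push ` interval_divisors m" and ?S = "?stretch ` stretchable_divisors m"
  have "inj_on ?push (interval_divisors m)"
    by (rule inj_onI) (simp add: insert_zero_Suc_image_eq_iff)
  moreover have "inj_on ?stretch (stretchable_divisors m)"
  proof (rule inj_onI)
    fix B C assume "B \<in> stretchable_divisors m" "C \<in> stretchable_divisors m"
    then have "0 \<in> B" "0 \<in> C"
      using zero_mem_interval_divisors unfolding stretchable_divisors_def by blast+
    moreover assume "?stretch B = ?stretch C"
    ultimately show "B = C" by (metis insert_Diff insert_zero_Suc_image_eq_iff)
  qed
  moreover note finite_stretchable_divisors
  moreover have "?P \<inter> ?S = {}"
    \<comment> \<open>pushed sets contain 1, stretched ones do not\<close>
    using zero_mem_interval_divisors by force
  ultimately have "card (?P \<union> ?S) = card (interval_divisors m) + card (stretchable_divisors m)"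
    using finite_interval_divisors by (simp add: card_Un_disjoint card_image)
  moreover have "?P \<union> ?S \<subseteq> interval_divisors (Suc m)"
    using interval_divisor_push unfolding stretchable_divisors_def interval_divisors_def by blast
  ultimately show ?thesis using card_mono[OF finite_interval_divisors] by metis
qed

lemma not_stretchable_one_mem:
  assumes "B \<in> interval_divisors m" "1 \<in> B" "B \<notin> stretchable_divisors m"
  shows "B = {0..m}"
proof -
  obtain b where B: "interval_divisor B b m" using assms(1) unfolding interval_divisors_def by blast
  have "\<not> b < m"
    using interval_divisor_stretch[OF B assms(2)] assms(1,3)
    unfolding stretchable_divisors_def interval_divisors_def by blast
  then have "b = m" using interval_divisorD(3)[OF B] by simp
  then show ?thesis using interval_divisor_full B by blast
qed

lemma not_stretchable_insert_one:
  assumes "B \<in> interval_divisors m" "1 \<notin> B" "B \<notin> stretchable_divisors m"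
  shows "insert 1 B \<in> stretchable_divisors m"
proof -
  obtain b where B: "interval_divisor B b m" using assms(1) unfolding interval_divisors_def by blast
  have "B \<noteq> {0}" using singleton_zero_stretchable assms(3) by blast
  then have "b \<noteq> 0" using interval_divisorD(1,4)[OF B] by auto
  moreover have "b \<noteq> 1" using interval_divisorD(2)[OF B] assms(2) by auto
  moreover have "b \<noteq> m"
    using interval_divisor_full[of B m] B assms(2) \<open>b \<noteq> 0\<close> by auto
  ultimately have "2 \<le> b" "b < m" using interval_divisorD(3)[OF B] by auto
  then have B': "interval_divisor (insert 1 B) b m"
    using interval_divisorD[OF B] by (intro interval_divisorI) auto
  then show ?thesis
    using interval_divisor_stretch[OF B' _ \<open>b < m\<close>]
    unfolding stretchable_divisors_def interval_divisors_def by blast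
qed

lemma interval_divisors_zero: "interval_divisors 0 = {{0}}"
proof -
  have "interval_divisor B b 0 \<longleftrightarrow> B = {0} \<and> b = 0" for B b
    using interval_divisor_full[of B 0] by (auto simp: interval_divisor_def)
  then show ?thesis unfolding interval_divisors_def by auto
qed

lemma zero_one_stretchable:
  assumes "2 \<le> m"
  shows "{0, 1} \<in> stretchable_divisors m"
proof -
  have "interval_divisor {0, 1} 1 m"
    using assms by (intro interval_divisorI) auto
  moreover have "interval_divisor {0, 2} 2 (Suc m)"
  proof (rule interval_divisorI)
    show "\<exists>y\<in>{0, 2}. y \<le> x \<and> x \<le> y + (Suc m - 2)" if "x \<le> 2" for x
      using that assms by (cases "x = 2") auto
  qed (use assms in auto)
  moreover have "insert 0 (Suc ` ({0, 1} - {0})) = {0, 2 :: nat}" by auto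
  ultimately show ?thesis
    unfolding stretchable_divisors_def interval_divisors_def by auto
qed

lemma inj_on_not_stretchable:
  "inj_on (\<lambda>B. if 1 \<in> B then {0} else insert 1 B) (interval_divisors m - stretchable_divisors m)"
proof (rule inj_onI)
  fix B C assume B: "B \<in> interval_divisors m - stretchable_divisors m"
    and C: "C \<in> interval_divisors m - stretchable_divisors m"
    and eq: "(if 1 \<in> B then {0} else insert 1 B) = (if 1 \<in> C then {0} else insert 1 C)"
  show "B = C"
  proof (cases "1 \<in> B")
    case True
    then have "1 \<in> C" using eq by (auto split: if_splits)
    then show ?thesis using B C True by (metis DiffE not_stretchable_one_mem)
  next
    case False
    then have "1 \<notin> C" using eq by (auto split: if_splits)
    then show ?thesis using eq False by (simp add: insert_ident)
  qed
qed

lemma card_not_stretchable_le: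
  shows "card (interval_divisors m - stretchable_divisors m) \<le> card (stretchable_divisors m)"
    and "m \<noteq> 1 \<Longrightarrow>
      card (interval_divisors m - stretchable_divisors m) < card (stretchable_divisors m)"
proof -
  let ?N = "interval_divisors m - stretchable_divisors m"
  let ?code = "\<lambda>B. if 1 \<in> B then {0} else insert 1 B"
  have image: "?code ` ?N \<subseteq> stretchable_divisors m"
    using singleton_zero_stretchable not_stretchable_insert_one by auto
  show "card ?N \<le> card (stretchable_divisors m)"
    using card_inj_on_le[OF inj_on_not_stretchable image finite_stretchable_divisors] .
  assume "m \<noteq> 1"
  then consider "m = 0" | "2 \<le> m" by linarith
  then obtain T where "T \<in> stretchable_divisors m" "T \<notin> ?code ` ?N"
  proof cases
    case 1
    then have "?N = {}" using interval_divisors_zero singleton_zero_stretchable by simp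
    then show thesis using that singleton_zero_stretchable by blast
  next
    case 2
    have "{0, 1} \<notin> ?code ` ?N"
    proof
      assume "{0, 1} \<in> ?code ` ?N"
      then obtain B where B: "B \<in> ?N" "1 \<notin> B" "insert 1 B = {0, 1}"
        by (auto split: if_splits)
      then have "B = {0}" using zero_mem_interval_divisors by blast
      then show False using B(1) singleton_zero_stretchable by simp
    qed
    then show thesis using that zero_one_stretchable[OF 2] by blast
  qed
  then have "?code ` ?N \<subset> stretchable_divisors m" using image by blast
  then show "card ?N < card (stretchable_divisors m)"
    by (rule card_less_if_inj_on_psubset[OF inj_on_not_stretchable _ finite_stretchable_divisors])
qed

lemma card_interval_divisors_Suc_ge:
  shows "3 * card (interval_divisors m) \<le> 2 * card (interval_divisors (Suc m))"
    and "m \<noteq> 1 \<Longrightarrow> 3 * card (interval_divisors m) < 2 * card (interval_divisors (Suc m))"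
proof -
  have "card (interval_divisors m) =
      card (stretchable_divisors m) + card (interval_divisors m - stretchable_divisors m)"
    using card_Diff_subset[of "stretchable_divisors m" "interval_divisors m"]
      card_mono[OF finite_interval_divisors, of "stretchable_divisors m"]
      finite_interval_divisors finite_subset
    unfolding stretchable_divisors_def by fastforce
  then show "3 * card (interval_divisors m) \<le> 2 * card (interval_divisors (Suc m))"
    and "m \<noteq> 1 \<Longrightarrow> 3 * card (interval_divisors m) < 2 * card (interval_divisors (Suc m))"
    using card_add_stretchable_le[of m] card_not_stretchable_le[of m] by linarith+
qed

lemma card_interval_divisors_add_ge:
  shows "(i + 3) * card (interval_divisors j) \<le> 2 * card (interval_divisors (j + i + 1))"
    and "i \<noteq> 0 \<or> j \<noteq> 1 \<Longrightarrow>
      (i + 3) * card (interval_divisors j) < 2 * card (interval_divisors (j + i + 1))"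
proof -
  let ?N = "\<lambda>m. card (interval_divisors m)"
  have step: "(Suc i + 3) * ?N j < 2 * ?N (j + Suc i + 1)"
    if IH: "(i + 3) * ?N j \<le> 2 * ?N (j + i + 1)" for i
  proof -
    \<comment> \<open>\<open>(i + 4) / (i + 3) < 3 / 2\<close>\<close>
    have "2 * ((Suc i + 3) * ?N j) < 3 * ((i + 3) * ?N j)"
      using card_interval_divisors_pos[of j] by (simp add: algebra_simps)
    also have "\<dots> \<le> 3 * (2 * ?N (j + i + 1))" using IH by (rule mult_le_mono2)
    also have "\<dots> \<le> 2 * (2 * ?N (j + Suc i + 1))"
      using card_interval_divisors_Suc_ge(1)[of "j + i + 1"] by simp
    finally show ?thesis by linarith
  qed
  show le: "(i + 3) * ?N j \<le> 2 * ?N (j + i + 1)" for i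
  proof (induction i)
    case 0
    show ?case using card_interval_divisors_Suc_ge(1)[of j] by simp
  next
    case (Suc i)
    show ?case using step[OF Suc.IH] by (rule less_imp_le)
  qed
  show "(i + 3) * ?N j < 2 * ?N (j + i + 1)" if "i \<noteq> 0 \<or> j \<noteq> 1"
  proof (cases i)
    case 0
    then show ?thesis using that card_interval_divisors_Suc_ge(2)[of j] by simp
  next
    case (Suc i')
    then show ?thesis using step[OF le[of i']] by (simp only:)
  qed
qed

lemma weighted_card_interval_divisors_le:
  assumes "1 \<le> k" "a \<le> k"
  shows "(a + 1) * card (interval_divisors (k - a)) \<le> 2 * card (interval_divisors (k - 1))"
    and "a \<noteq> 1 \<Longrightarrow> k \<notin> {1, 3} \<Longrightarrow>
      (a + 1) * card (interval_divisors (k - a)) < 2 * card (interval_divisors (k - 1))"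
proof -
  consider "a = 0" | "a = 1" | i where "a = i + 2"
    by (metis One_nat_def add_2_eq_Suc' not0_implies_Suc)
  then have "(a + 1) * card (interval_divisors (k - a)) \<le> 2 * card (interval_divisors (k - 1)) \<and>
      (a \<noteq> 1 \<longrightarrow> k \<notin> {1, 3} \<longrightarrow>
        (a + 1) * card (interval_divisors (k - a)) < 2 * card (interval_divisors (k - 1)))"
  proof cases
    case 1
    have "Suc (k - 1) = k" "k \<noteq> 1 \<Longrightarrow> 1 \<le> k - 1" using assms(1) by simp_all
    then show ?thesis using 1 card_interval_divisors_Suc_le[of "k - 1"] by auto
  next
    case 2
    then show ?thesis by simp
  next
    case (3 i)
    then have "a + 1 = i + 3" "k - a + i + 1 = k - 1" "k \<notin> {1, 3} \<Longrightarrow> i \<noteq> 0 \<or> k - a \<noteq> 1"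
      using assms by auto
    then show ?thesis using card_interval_divisors_add_ge[of i "k - a"] by metis
  qed
  then show "(a + 1) * card (interval_divisors (k - a)) \<le> 2 * card (interval_divisors (k - 1))"
    and "a \<noteq> 1 \<Longrightarrow> k \<notin> {1, 3} \<Longrightarrow>
      (a + 1) * card (interval_divisors (k - a)) < 2 * card (interval_divisors (k - 1))"
    by blast+
qed

theorem mainTheorem2:
  fixes k :: nat
  assumes "k \<ge> 1"
  shows "(\<forall>A. A \<noteq> {} \<and> A \<subseteq> {0..k} \<longrightarrow> num_divisors A \<le> num_divisors {1..k})
       \<and> (k \<notin> {1, 3} \<longrightarrow>
            (\<forall>A. A \<noteq> {} \<and> A \<subseteq> {0..k} \<and> num_divisors A = num_divisors {1..k}
                 \<longrightarrow> A = {1..k}))"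
proof -
  have top: "2 * card (interval_divisors (k - 1)) \<le> num_divisors {1..k}"
    using num_divisors_interval_ge[of 1 "k - 1"] assms by simp
  have Min_le: "Min A \<le> k" if "A \<noteq> {}" "A \<subseteq> {0..k}" for A
  proof -
    have "finite A" using that(2) finite_subset by blast
    then show ?thesis using that Min_in by fastforce
  qed
  show ?thesis
  proof (intro conjI allI impI)
    fix A assume A: "A \<noteq> {} \<and> A \<subseteq> {0..k}"
    then have "num_divisors A \<le> (Min A + 1) * card (interval_divisors (k - Min A))"
      using num_divisors_le_bound(1) by blast
    also have "\<dots> \<le> 2 * card (interval_divisors (k - 1))"
      using weighted_card_interval_divisors_le(1)[OF assms Min_le] A by blast
    finally show "num_divisors A \<le> num_divisors {1..k}" using top by (rule le_trans)
  next
    fix A assume "k \<notin> {1, 3}"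
      and A: "A \<noteq> {} \<and> A \<subseteq> {0..k} \<and> num_divisors A = num_divisors {1..k}"
    then have "Min A \<le> k" using Min_le by blast
    have eq: "num_divisors A = (Min A + 1) * card (interval_divisors (k - Min A))"
      and "(Min A + 1) * card (interval_divisors (k - Min A))
        = 2 * card (interval_divisors (k - 1))"
      using num_divisors_le_bound(1)[of A k] A top
        weighted_card_interval_divisors_le(1)[OF assms \<open>Min A \<le> k\<close>] by linarith+
    then have "Min A = 1"
      using weighted_card_interval_divisors_le(2)[OF assms \<open>Min A \<le> k\<close> _ \<open>k \<notin> {1, 3}\<close>] by linarith
    moreover have "A = {Min A..k}" using num_divisors_le_bound(2) A eq by blast
    ultimately show "A = {1..k}" by simp
  qed
qed

end
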